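(* Let $(X,\|\cdot,\cdot\|)$ be a linear 2-normed space and let $E$ be a nonempty (sequentially) closed and bounded subset of $X$. Let $T:E\to X$ be a strong accretive mapping. If $(I+T)(E)\supset E$, then the equation $Tx=\theta$ has a solution $x\in E$, where $\theta$ is the zero vector of $X$.
   Context: A linear 2-normed space is a real linear space $X$ of dimension greater than 1 with a function $\|\cdot,\cdot\|:X\times X\to\mathbb{R}$ such that: $\|x,y\|=0$ iff $x,y$ are linearly dependent; $\|x,y\|=\|y,x\|$; $\|\alpha x,y\|=|\alpha|\,\|x,y\|$; $\|x+y,z\|\le\|x,z\|+\|y,z\|$. A sequence $x_n\to x$ means $\|x_n-x,z\|\to0$ for every $z\in X$. $E$ is (sequentially) closed if every limit of a sequence in $E$ lies in $E$. For $e\in E$, $E$ is $e$-bounded if there is $M>0$ with $\|x,e\|\le M$ for all $x\in E$; $E$ is bounded if it is $e$-bounded for every $e\in E$. A mapping $T$ is strong accretive if, for a constant $k\in(0,1)$, for every $z\in X$ one has $\|(\lambda-k)(x-y),z\|\le\|(\lambda-1)(x-y)+(Tx-Ty),z\|$ for all $x,y$ in the domain of $T$ and all $\lambda>k$. *)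

theory Defs
  imports "HOL-Analysis.Analysis"
begin

definition lin_dep2 :: "'a::real_vector \<Rightarrow> 'a \<Rightarrow> bool" where
  "lin_dep2 x y \<longleftrightarrow> (\<exists>a b::real. (a \<noteq> 0 \<or> b \<noteq> 0) \<and> a *\<^sub>R x + b *\<^sub>R y = 0)"

definition two_normed :: "('a::real_vector \<Rightarrow> 'a \<Rightarrow> real) \<Rightarrow> bool" where
  "two_normed N \<longleftrightarrow>
     (\<exists>u v::'a. \<not> lin_dep2 u v) \<and>
     (\<forall>x y. N x y = 0 \<longleftrightarrow> lin_dep2 x y) \<and>
     (\<forall>x y. N x y = N y x) \<and>
     (\<forall>(a::real) x y. N (a *\<^sub>R x) y = \<bar>a\<bar> * N x y) \<and>
     (\<forall>x y z. N (x + y) z \<le> N x z + N y z)"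

definition conv2 :: "('a::real_vector \<Rightarrow> 'a \<Rightarrow> real) \<Rightarrow> (nat \<Rightarrow> 'a) \<Rightarrow> 'a \<Rightarrow> bool" where
  "conv2 N s x \<longleftrightarrow> (\<forall>z. (\<lambda>n. N (s n - x) z) \<longlonglongrightarrow> 0)"

definition closed2 :: "('a::real_vector \<Rightarrow> 'a \<Rightarrow> real) \<Rightarrow> 'a set \<Rightarrow> bool" where
  "closed2 N E \<longleftrightarrow> (\<forall>s x. (\<forall>n. s n \<in> E) \<longrightarrow> conv2 N s x \<longrightarrow> x \<in> E)"

definition e_bounded2 :: "('a::real_vector \<Rightarrow> 'a \<Rightarrow> real) \<Rightarrow> 'a set \<Rightarrow> 'a \<Rightarrow> bool" where
  "e_bounded2 N E e \<longleftrightarrow> (\<exists>M>0. \<forall>x\<in>E. N x e \<le> M)"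

definition bounded2 :: "('a::real_vector \<Rightarrow> 'a \<Rightarrow> real) \<Rightarrow> 'a set \<Rightarrow> bool" where
  "bounded2 N E \<longleftrightarrow> (\<forall>e\<in>E. e_bounded2 N E e)"

definition strong_accretive2 ::
  "('a::real_vector \<Rightarrow> 'a \<Rightarrow> real) \<Rightarrow> 'a set \<Rightarrow> ('a \<Rightarrow> 'a) \<Rightarrow> bool" where
  "strong_accretive2 N E T \<longleftrightarrow>
     (\<exists>k::real. 0 < k \<and> k < 1 \<and>
        (\<forall>z x y (l::real). x \<in> E \<longrightarrow> y \<in> E \<longrightarrow> l > k \<longrightarrow>
           N ((l - k) *\<^sub>R (x - y)) z \<le> N ((l - 1) *\<^sub>R (x - y) + (T x - T y)) z))"

end

theory Submission
  imports Defs
begin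

text \<open>Taking \<open>\<lambda> = 2\<close> in strong accretivity shows that \<open>I + T\<close> expands every 2-norm
  \<open>\<parallel>\<cdot>, z\<parallel>\<close> by the factor \<open>2 - k > 1\<close>. Iterating a right inverse of \<open>I + T\<close> on \<open>E\<close> therefore
  gives a sequence whose successive differences contract by \<open>c = 1/(2 - k)\<close> in every
  \<open>\<parallel>\<cdot>, z\<parallel>\<close>. Choosing \<open>z\<close> to be the previous difference forces \<open>\<parallel>d\<^sub>n\<^sub>+\<^sub>1, d\<^sub>n\<parallel> = 0\<close>, i.e. the
  differences are collinear, so the whole sequence lies on one line, where it converges
  like a geometric series. Closedness puts the limit in \<open>E\<close>, and the expansion estimate
  identifies it as a fixed point of \<open>I + T\<close>, i.e. a zero of \<open>T\<close>.\<close>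

lemma two_normed_scaleR: "two_normed N \<Longrightarrow> N (a *\<^sub>R x) y = \<bar>a\<bar> * N x y"
  unfolding two_normed_def by blast

lemma two_normed_add_le: "two_normed N \<Longrightarrow> N (x + y) z \<le> N x z + N y z"
  unfolding two_normed_def by blast

lemma two_normed_eq_0_iff: "two_normed N \<Longrightarrow> N x y = 0 \<longleftrightarrow> lin_dep2 x y"
  unfolding two_normed_def by blast

lemma two_normed_self: "two_normed N \<Longrightarrow> N x x = 0"
  by (simp add: two_normed_eq_0_iff lin_dep2_def) (rule exI[of _ 1], rule exI[of _ "-1"], simp)

lemma two_normed_nonneg:
  assumes "two_normed N"
  shows "0 \<le> N x z"
proof -
  have "N (x + (-x)) z \<le> N x z + N (-x) z" by (rule two_normed_add_le[OF assms])
  moreover have "N (-x) z = N x z" using two_normed_scaleR[OF assms, of "-1" x z] by simp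
  moreover have "N (x + (-x)) z = 0" using two_normed_scaleR[OF assms, of 0 x z] by simp
  ultimately show ?thesis by linarith
qed

lemma two_normed_minus_commute:
  assumes "two_normed N"
  shows "N (x - y) z = N (y - x) z"
  using two_normed_scaleR[OF assms, of "-1" "x - y" z] by simp

lemma two_normed_diff_triangle:
  "two_normed N \<Longrightarrow> N (x - y) z \<le> N (x - w) z + N (w - y) z"
  using two_normed_add_le[of N "x - w" "w - y" z] by simp

lemma two_normed_eq_0_imp_scaleR:
  assumes "two_normed N" "N u v = 0" "v \<noteq> 0"
  shows "\<exists>t. u = t *\<^sub>R v"
proof -
  obtain a b :: real where ab: "a \<noteq> 0 \<or> b \<noteq> 0" "a *\<^sub>R u + b *\<^sub>R v = 0"
    using assms(2) two_normed_eq_0_iff[OF assms(1)] unfolding lin_dep2_def by blast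
  have "a \<noteq> 0" using ab assms(3) by auto
  have "a *\<^sub>R u = - (b *\<^sub>R v)" using ab(2) by (simp add: eq_neg_iff_add_eq_0)
  then have "(1 / a) *\<^sub>R (a *\<^sub>R u) = (1 / a) *\<^sub>R (- (b *\<^sub>R v))" by simp
  then have "u = (- b / a) *\<^sub>R v" using \<open>a \<noteq> 0\<close> by simp
  then show ?thesis by blast
qed

text \<open>This is where \<open>dim X > 1\<close> enters: a nonzero \<open>u\<close> would make every vector, in particular
  both members of a linearly independent pair, a multiple of \<open>u\<close>.\<close>

lemma two_normed_all_eq_0_imp_zero:
  fixes N :: "'a::real_vector \<Rightarrow> 'a \<Rightarrow> real"
  assumes N: "two_normed N" and zero: "\<And>z. N u z = 0"
  shows "u = 0"
proof (rule ccontr)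
  assume u: "u \<noteq> 0"
  obtain p q :: 'a where pq: "\<not> lin_dep2 p q" using N unfolding two_normed_def by meson
  have "N p u = 0" "N q u = 0" using zero N unfolding two_normed_def by metis+
  then obtain s t where "p = s *\<^sub>R u" "q = t *\<^sub>R u"
    using two_normed_eq_0_imp_scaleR[OF N _ u] by blast
  then have "lin_dep2 p q"
    unfolding lin_dep2_def
    by (cases "s = 0") (rule exI[of _ 1], rule exI[of _ 0], simp,
                        rule exI[of _ t], rule exI[of _ "-s"], simp)
  with pq show False by blast
qed

lemma conv2_unique:
  assumes N: "two_normed N" and "conv2 N s x" "conv2 N s y"
  shows "x = y"
proof -
  have "N (x - y) z = 0" for z
  proof (rule order.antisym)
    have "(\<lambda>n. N (s n - x) z + N (s n - y) z) \<longlonglongrightarrow> 0"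
      using assms(2,3) tendsto_add[of "\<lambda>n. N (s n - x) z" 0 _ "\<lambda>n. N (s n - y) z" 0]
      unfolding conv2_def by simp
    moreover have "N (x - y) z \<le> N (s n - x) z + N (s n - y) z" for n
      using two_normed_diff_triangle[OF N, of x y z "s n"] two_normed_minus_commute[OF N, of x "s n" z]
      by simp
    ultimately show "N (x - y) z \<le> 0"
      by (intro LIMSEQ_le_const) auto
  qed (rule two_normed_nonneg[OF N])
  then have "x - y = 0" by (rule two_normed_all_eq_0_imp_zero[OF N])
  then show ?thesis by simp
qed

lemma conv2_dominated:
  assumes N: "two_normed N" and "conv2 N s x"
    and le: "\<And>n z. N (t n - y) z \<le> c * N (s n - x) z"
  shows "conv2 N t y"
  unfolding conv2_def
proof
  fix z
  have "(\<lambda>n. c * N (s n - x) z) \<longlonglongrightarrow> 0"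
    using assms(2) unfolding conv2_def by (simp add: tendsto_mult_right_zero)
  then show "(\<lambda>n. N (t n - y) z) \<longlonglongrightarrow> 0"
    by (rule Lim_null_comparison[rotated])
       (simp add: le two_normed_nonneg[OF N])
qed

lemma conv2_partial_sums_scaleR:
  assumes N: "two_normed N" and "summable \<sigma>"
  shows "conv2 N (\<lambda>n. a + (\<Sum>i<n. \<sigma> i) *\<^sub>R d) (a + suminf \<sigma> *\<^sub>R d)"
  unfolding conv2_def
proof
  fix z
  have "(\<lambda>n. \<bar>(\<Sum>i<n. \<sigma> i) - suminf \<sigma>\<bar> * N d z) \<longlonglongrightarrow> 0"
    using LIM_zero[OF summable_LIMSEQ[OF assms(2)]]
    by (intro tendsto_mult_left_zero tendsto_rabs_zero)
  moreover have "N ((a + (\<Sum>i<n. \<sigma> i) *\<^sub>R d) - (a + suminf \<sigma> *\<^sub>R d)) z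
      = \<bar>(\<Sum>i<n. \<sigma> i) - suminf \<sigma>\<bar> * N d z" for n
    using two_normed_scaleR[OF N, of "(\<Sum>i<n. \<sigma> i) - suminf \<sigma>" d z]
    by (simp add: scaleR_diff_left)
  ultimately show "(\<lambda>n. N ((a + (\<Sum>i<n. \<sigma> i) *\<^sub>R d) - (a + suminf \<sigma> *\<^sub>R d)) z) \<longlonglongrightarrow> 0"
    by simp
qed

lemma two_normed_contracting_seq_collinear:
  assumes N: "two_normed N" and contr: "\<And>n z. N (D (Suc n)) z \<le> c * N (D n) z"
  shows "\<exists>s. D n = s *\<^sub>R D 0"
proof (induction n)
  case 0
  show ?case by (rule exI[of _ 1]) simp
next
  case (Suc n)
  then obtain s where s: "D n = s *\<^sub>R D 0" by blast
  show ?case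
  proof (cases "D n = 0")
    case True
    have "N (D (Suc n)) z = 0" for z
      using contr[of n z] two_normed_nonneg[OF N, of "D (Suc n)" z]
        two_normed_scaleR[OF N, of 0 "D n" z] True by simp
    then have "D (Suc n) = 0" by (rule two_normed_all_eq_0_imp_zero[OF N])
    then show ?thesis by (intro exI[of _ 0]) simp
  next
    case False
    have "N (D (Suc n)) (D n) = 0"
      using contr[of n "D n"] two_normed_self[OF N, of "D n"]
        two_normed_nonneg[OF N, of "D (Suc n)" "D n"] by simp
    then obtain t where "D (Suc n) = t *\<^sub>R D n"
      using two_normed_eq_0_imp_scaleR[OF N _ False] by blast
    with s show ?thesis by (intro exI[of _ "t * s"]) simp
  qed
qed

lemma two_normed_contracting_seq_geometric:
  assumes N: "two_normed N" and "0 \<le> c"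
    and contr: "\<And>n z. N (D (Suc n)) z \<le> c * N (D n) z"
  shows "\<exists>\<sigma>. \<forall>n. D n = \<sigma> n *\<^sub>R D 0 \<and> \<bar>\<sigma> n\<bar> \<le> c ^ n"
proof (cases "D 0 = 0")
  case True
  then have "D n = 0" for n
    using two_normed_contracting_seq_collinear[where D = D, OF N contr, of n] by auto
  with True \<open>0 \<le> c\<close> show ?thesis by (intro exI[of _ "\<lambda>_. 0"]) simp
next
  case False
  have "\<forall>n. \<exists>s. D n = s *\<^sub>R D 0"
    using two_normed_contracting_seq_collinear[where D = D, OF N contr] by blast
  then obtain \<sigma> where \<sigma>: "\<And>n. D n = \<sigma> n *\<^sub>R D 0" by metis
  obtain z where "N (D 0) z \<noteq> 0"
    using two_normed_all_eq_0_imp_zero[OF N] False by blast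
  then have z: "N (D 0) z > 0" using two_normed_nonneg[OF N, of "D 0" z] by simp
  have geometric: "N (D n) z \<le> c ^ n * N (D 0) z" for n
  proof (induction n)
    case (Suc n)
    have "N (D (Suc n)) z \<le> c * N (D n) z" by (rule contr)
    also have "\<dots> \<le> c * (c ^ n * N (D 0) z)" using Suc \<open>0 \<le> c\<close> by (rule mult_left_mono)
    finally show ?case by simp
  qed simp
  have "\<bar>\<sigma> n\<bar> * N (D 0) z \<le> c ^ n * N (D 0) z" for n
    using geometric[of n] two_normed_scaleR[OF N, of "\<sigma> n" "D 0" z] by (simp only: \<sigma>[of n])
  then have "\<bar>\<sigma> n\<bar> \<le> c ^ n" for n using z by simp
  with \<sigma> show ?thesis by blast
qed

lemma two_normed_contracting_diffs_convergent:
  assumes N: "two_normed N" and "0 \<le> c" "c < 1"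
    and contr: "\<And>n z. N (xs (Suc (Suc n)) - xs (Suc n)) z \<le> c * N (xs (Suc n) - xs n) z"
  shows "\<exists>x. conv2 N xs x"
proof -
  define d where "d = xs 1 - xs 0"
  obtain \<sigma> where \<sigma>: "\<And>n. xs (Suc n) - xs n = \<sigma> n *\<^sub>R d" and bound: "\<And>n. \<bar>\<sigma> n\<bar> \<le> c ^ n"
    using two_normed_contracting_seq_geometric[where D = "\<lambda>n. xs (Suc n) - xs n", OF N \<open>0 \<le> c\<close> contr]
    unfolding d_def by auto
  have "summable \<sigma>"
  proof (rule summable_comparison_test')
    show "summable (\<lambda>n. c ^ n)" using \<open>0 \<le> c\<close> \<open>c < 1\<close> by (simp add: summable_geometric)
    show "norm (\<sigma> n) \<le> c ^ n" for n using bound by simp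
  qed
  moreover have xs_eq: "xs = (\<lambda>n. xs 0 + (\<Sum>i<n. \<sigma> i) *\<^sub>R d)"
  proof
    show "xs n = xs 0 + (\<Sum>i<n. \<sigma> i) *\<^sub>R d" for n
    proof (induction n)
      case (Suc n)
      have "xs (Suc n) = xs n + \<sigma> n *\<^sub>R d" using \<sigma>[of n] by (simp add: algebra_simps)
      with Suc show ?case by (simp add: scaleR_add_left)
    qed simp
  qed
  ultimately have "conv2 N xs (xs 0 + suminf \<sigma> *\<^sub>R d)"
    using conv2_partial_sums_scaleR[OF N, of \<sigma> "xs 0" d] by (simp only: xs_eq[symmetric])
  then show ?thesis by blast
qed

lemma closed2_expanding_onto_fixpoint:
  assumes N: "two_normed N" and "closed2 N E" "E \<noteq> {}" and onto: "E \<subseteq> F ` E"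
    and "0 \<le> c" "c < 1"
    and expand: "\<And>x y z. x \<in> E \<Longrightarrow> y \<in> E \<Longrightarrow> N (x - y) z \<le> c * N (F x - F y) z"
  shows "\<exists>x\<in>E. F x = x"
proof -
  define g where "g y = (SOME x. x \<in> E \<and> F x = y)" for y
  have g: "g y \<in> E \<and> F (g y) = y" if "y \<in> E" for y
  proof -
    have "\<exists>x. x \<in> E \<and> F x = y" using onto that by blast
    then show ?thesis unfolding g_def by (rule someI_ex)
  qed
  obtain x0 where "x0 \<in> E" using \<open>E \<noteq> {}\<close> by blast
  define xs where "xs n = (g ^^ n) x0" for n
  have xs: "xs n \<in> E" for n
    by (induction n) (auto simp: xs_def \<open>x0 \<in> E\<close> g)
  have F_xs: "F (xs (Suc n)) = xs n" for n
    using g[OF xs[of n]] by (simp add: xs_def)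
  have "N (xs (Suc (Suc n)) - xs (Suc n)) z \<le> c * N (xs (Suc n) - xs n) z" for n z
    using expand[OF xs xs, of "Suc (Suc n)" "Suc n" z] by (simp add: F_xs)
  then obtain x where lim: "conv2 N xs x"
    using two_normed_contracting_diffs_convergent[OF N \<open>0 \<le> c\<close> \<open>c < 1\<close>] by blast
  then have "x \<in> E" using \<open>closed2 N E\<close> xs unfolding closed2_def by blast
  then obtain w where w: "w \<in> E" "F w = x" using onto by blast
  have "conv2 N (\<lambda>n. xs (Suc n)) w"
  proof (rule conv2_dominated[OF N lim])
    show "N (xs (Suc n) - w) z \<le> c * N (xs n - x) z" for n z
      using expand[OF xs w(1), of "Suc n" z] by (simp add: F_xs w(2))
  qed
  moreover have "conv2 N (\<lambda>n. xs (Suc n)) x"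
    using lim LIMSEQ_Suc unfolding conv2_def by blast
  ultimately have "w = x" by (rule conv2_unique[OF N])
  with w have "F w = w" by simp
  with w(1) show ?thesis by blast
qed

lemma strong_accretive2_imp_expanding:
  assumes N: "two_normed N" and "strong_accretive2 N E T"
  shows "\<exists>c. 0 < c \<and> c < 1 \<and>
    (\<forall>x\<in>E. \<forall>y\<in>E. \<forall>z. N (x - y) z \<le> c * N ((x + T x) - (y + T y)) z)"
proof -
  obtain k :: real where k: "0 < k" "k < 1"
    and acc: "\<And>z x y l. x \<in> E \<Longrightarrow> y \<in> E \<Longrightarrow> l > k \<Longrightarrow>
           N ((l - k) *\<^sub>R (x - y)) z \<le> N ((l - 1) *\<^sub>R (x - y) + (T x - T y)) z"
    using assms(2) unfolding strong_accretive2_def by blast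
  have "N (x - y) z \<le> 1 / (2 - k) * N ((x + T x) - (y + T y)) z"
    if "x \<in> E" "y \<in> E" for x y z
  proof -
    have "(2 - k) * N (x - y) z = N ((2 - k) *\<^sub>R (x - y)) z"
      using two_normed_scaleR[OF N, of "2 - k" "x - y" z] k by simp
    also have "\<dots> \<le> N ((2 - 1) *\<^sub>R (x - y) + (T x - T y)) z"
      using acc[OF that, of 2 z] k by simp
    also have "(2 - 1) *\<^sub>R (x - y) + (T x - T y) = (x + T x) - (y + T y)"
      by (simp add: algebra_simps)
    finally show ?thesis using k by (simp add: field_simps)
  qed
  with k show ?thesis by (intro exI[of _ "1 / (2 - k)"]) auto
qed

theorem theorem3p12:
  fixes N :: "'a::real_vector \<Rightarrow> 'a \<Rightarrow> real"
    and E :: "'a set"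
    and T :: "'a \<Rightarrow> 'a"
  assumes "two_normed N"
    and "E \<noteq> {}"
    and "closed2 N E"
    and "bounded2 N E"
    and "strong_accretive2 N E T"
    and "E \<subseteq> (\<lambda>x. x + T x) ` E"
  shows "\<exists>x\<in>E. T x = 0"
proof -
  obtain c where "0 < c" "c < 1"
    and "\<forall>x\<in>E. \<forall>y\<in>E. \<forall>z. N (x - y) z \<le> c * N ((x + T x) - (y + T y)) z"
    using strong_accretive2_imp_expanding[OF assms(1,5)] by blast
  then obtain x where "x \<in> E" "x + T x = x"
    using closed2_expanding_onto_fixpoint[OF assms(1,3,2,6), of c] by auto
  then show ?thesis by auto
qed

end
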